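(* Let $R$ be a commutative ring, $A$ an $R$-algebra and $n,m$ positive integers. If $A^n$ can be generated by $m$ elements as an $R$-algebra, then $A^{n+1}$ can be generated by $m+1$ elements as an $R$-algebra. Consequently, if $\mathrm{gen}_m(A,R)$ is finite then the smallest number of generators of $A^{1+\mathrm{gen}_m(A,R)}$ as an $R$-algebra equals $m+1$.
   Context: Algebras are associative and unital; $A^n$ is the direct product of $n$ copies of $A$. $\mathrm{gen}_m(A,R)$ is the largest $k\in\mathbb Z\cup\{\infty\}$ such that $A^k$ can be generated by at most $m$ elements as an $R$-algebra. *)

theory Defs
  imports Main "HOL-Library.Extended_Nat"
begin

definition R_algebra :: "('r::comm_ring_1 \<Rightarrow> 'a::ring_1) \<Rightarrow> bool" where
  "R_algebra phi \<longleftrightarrow> phi 1 = 1 \<and> (\<forall>r s. phi (r + s) = phi r + phi s)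
     \<and> (\<forall>r s. phi (r * s) = phi r * phi s) \<and> (\<forall>r x. phi r * x = x * phi r)"

text \<open>The direct product A^n, represented as functions nat => 'a vanishing outside {..<n};
all operations are componentwise.\<close>
definition power_carrier :: "nat \<Rightarrow> (nat \<Rightarrow> 'a::zero) set" where
  "power_carrier n = {f. \<forall>i\<ge>n. f i = 0}"

text \<open>The R-subalgebra of A^n generated by G (contains the image of R, i.e. the scalars,
and is closed under addition and multiplication; this yields closure under scalar
multiplication and negation as well).\<close>
inductive_set subalg_gen :: "('r::comm_ring_1 \<Rightarrow> 'a::ring_1) \<Rightarrow> nat \<Rightarrow> (nat \<Rightarrow> 'a) set \<Rightarrow> (nat \<Rightarrow> 'a) set"
  for phi :: "'r::comm_ring_1 \<Rightarrow> 'a::ring_1" and n :: nat and G :: "(nat \<Rightarrow> 'a) set" where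
  gen: "g \<in> G \<Longrightarrow> g \<in> subalg_gen phi n G"
| scal: "(\<lambda>i. if i < n then phi r else 0) \<in> subalg_gen phi n G"
| add: "x \<in> subalg_gen phi n G \<Longrightarrow> y \<in> subalg_gen phi n G \<Longrightarrow> (\<lambda>i. x i + y i) \<in> subalg_gen phi n G"
| mult: "x \<in> subalg_gen phi n G \<Longrightarrow> y \<in> subalg_gen phi n G \<Longrightarrow> (\<lambda>i. x i * y i) \<in> subalg_gen phi n G"

definition can_gen :: "('r::comm_ring_1 \<Rightarrow> 'a::ring_1) \<Rightarrow> nat \<Rightarrow> nat \<Rightarrow> bool" where
  "can_gen phi n m \<longleftrightarrow> (\<exists>G. finite G \<and> card G \<le> m \<and> G \<subseteq> power_carrier n
      \<and> subalg_gen phi n G = power_carrier n)"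

definition gen_num :: "('r::comm_ring_1 \<Rightarrow> 'a::ring_1) \<Rightarrow> nat \<Rightarrow> enat" where
  "gen_num phi m = (if finite {k. can_gen phi k m} then enat (Max {k. can_gen phi k m}) else \<infinity>)"

end

theory Submission
  imports Defs
begin

(* Let G generate A^n (n > 0) with |G| <= m.  Embed A^n into A^(n+1) by the
   "diagonal lift" that copies coordinate 0 into the new coordinate n; it respects sums,
   products and scalars, so it maps the subalgebra generated by G into the subalgebra
   generated by the lifted generators.  Adding the idempotent e_n (1 in coordinate n,
   0 elsewhere) gives at most m + 1 generators of A^(n+1): every f in A^(n+1) equals
   lift a - e_n * lift a + e_n * lift b, where a is f restricted to the first n
   coordinates and b is the constant vector f n.
   For the second claim, let g = gen_m(A,R) be finite.  Since A^0 is generated by no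
   elements, the set {k. A^k has <= m generators} is nonempty, so A^g has m generators
   and, by the first claim, A^(g+1) has m + 1; by maximality of g it has no m
   generators, hence none with fewer (generation by <= k elements is monotone in k). *)

lemma subalg_gen_subset_carrier:
  assumes "G \<subseteq> power_carrier n" "x \<in> subalg_gen phi n G"
  shows "x \<in> power_carrier n"
  using assms(2) by induct (use assms(1) in \<open>auto simp: power_carrier_def\<close>)

lemma R_algebra_minus_one:
  assumes "R_algebra phi"
  shows "phi (-1) = -1"
proof -
  have add: "\<And>r s. phi (r + s) = phi r + phi s" and one: "phi 1 = 1"
    using assms by (auto simp: R_algebra_def)
  have "phi 0 = 0" using add[of 0 0] by simp
  moreover have "phi (-1) + phi 1 = phi 0" using add[of "-1" 1] by simp
  ultimately show ?thesis using one by (simp add: eq_neg_iff_add_eq_0)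
qed

text \<open>Generated subalgebras are closed under negation: multiply by the scalar -1.\<close>
lemma subalg_gen_uminus:
  assumes R: "R_algebra phi" and G: "G \<subseteq> power_carrier n"
    and x: "x \<in> subalg_gen phi n G"
  shows "(\<lambda>i. - x i) \<in> subalg_gen phi n G"
proof -
  have "(\<lambda>i. (if i < n then phi (-1) else 0) * x i) \<in> subalg_gen phi n G"
    using subalg_gen.scal x by (rule subalg_gen.mult)
  moreover have "(\<lambda>i. (if i < n then phi (-1) else 0) * x i) = (\<lambda>i. - x i)"
    using subalg_gen_subset_carrier[OF G x] R_algebra_minus_one[OF R]
    by (auto simp: power_carrier_def)
  ultimately show ?thesis by simp
qed

text \<open>A^0 is the zero ring, generated by the empty set.\<close>
lemma subalg_gen_zero_power:
  fixes phi :: "'r::comm_ring_1 \<Rightarrow> 'a::ring_1"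
  shows "subalg_gen phi 0 {} = power_carrier 0"
proof
  show "subalg_gen phi 0 {} \<subseteq> power_carrier 0"
    using subalg_gen_subset_carrier[of "{}" 0] by auto
  have "(\<lambda>i. if i < 0 then phi 0 else 0) \<in> subalg_gen phi 0 {}" by (rule subalg_gen.scal)
  moreover have "power_carrier 0 = {(\<lambda>i. 0) :: nat \<Rightarrow> 'a}" by (auto simp: power_carrier_def)
  ultimately show "power_carrier 0 \<subseteq> subalg_gen phi 0 {}" by simp
qed

text \<open>The diagonal lift A^n \<rightarrow> A^(n+1), x \<mapsto> (x_0, ..., x_(n-1), x_0); a unital
algebra homomorphism as soon as n > 0.\<close>
definition diag_lift :: "nat \<Rightarrow> (nat \<Rightarrow> 'a::zero) \<Rightarrow> nat \<Rightarrow> 'a" where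
  "diag_lift n x = (\<lambda>i. if i < n then x i else if i = n then x 0 else 0)"

definition last_unit :: "nat \<Rightarrow> nat \<Rightarrow> 'a::{zero,one}" where
  "last_unit n = (\<lambda>i. if i = n then 1 else 0)"

lemma diag_lift_subalg_gen:
  assumes n: "0 < n" and H: "diag_lift n ` G \<subseteq> H"
    and x: "x \<in> subalg_gen phi n G"
  shows "diag_lift n x \<in> subalg_gen phi (n + 1) H"
  using x
proof induct
  case (gen g)
  then show ?case using H by (auto intro: subalg_gen.gen)
next
  case (scal r)
  have "diag_lift n (\<lambda>i. if i < n then phi r else 0) = (\<lambda>i. if i < n + 1 then phi r else 0)"
    using n by (auto simp: diag_lift_def)
  then show ?case by (simp add: subalg_gen.scal)
next
  case (add x y)
  have "diag_lift n (\<lambda>i. x i + y i) = (\<lambda>i. diag_lift n x i + diag_lift n y i)"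
    by (auto simp: diag_lift_def)
  then show ?case using add by (simp add: subalg_gen.add)
next
  case (mult x y)
  have "diag_lift n (\<lambda>i. x i * y i) = (\<lambda>i. diag_lift n x i * diag_lift n y i)"
    by (auto simp: diag_lift_def)
  then show ?case using mult by (simp add: subalg_gen.mult)
qed

text \<open>Every element f of A^(n+1) is lift a - e_n * lift a + e_n * lift b for some a, b in
A^n: take a = f truncated to A^n and b = the constant vector with value f n.\<close>
lemma power_carrier_Suc_decomp:
  fixes f :: "nat \<Rightarrow> 'a::ring_1"
  assumes n: "0 < n" and f: "f \<in> power_carrier (n + 1)"
  obtains a b where "a \<in> power_carrier n" "b \<in> power_carrier n"
    and "f = (\<lambda>i. (diag_lift n a i + - (last_unit n i * diag_lift n a i))
                  + last_unit n i * diag_lift n b i)"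
proof
  show "(\<lambda>i. if i < n then f i else 0) \<in> power_carrier n"
    and "(\<lambda>i. if i < n then f n else 0) \<in> power_carrier n"
    by (auto simp: power_carrier_def)
  show "f = (\<lambda>i. (diag_lift n (\<lambda>i. if i < n then f i else 0) i
                 + - (last_unit n i * diag_lift n (\<lambda>i. if i < n then f i else 0) i))
               + last_unit n i * diag_lift n (\<lambda>i. if i < n then f n else 0) i)"
    using n f by (auto simp: power_carrier_def diag_lift_def last_unit_def
        fun_eq_iff not_less_eq_eq)
qed

lemma subalg_gen_lift_generators:
  fixes phi :: "'r::comm_ring_1 \<Rightarrow> 'a::ring_1"
  assumes R: "R_algebra phi" and n: "0 < n"
    and G: "G \<subseteq> power_carrier n" "subalg_gen phi n G = power_carrier n"
  defines "H \<equiv> insert (last_unit n) (diag_lift n ` G)"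
  shows "H \<subseteq> power_carrier (n + 1)" and "subalg_gen phi (n + 1) H = power_carrier (n + 1)"
proof -
  show H_sub: "H \<subseteq> power_carrier (n + 1)"
    using G(1) by (auto simp: H_def power_carrier_def diag_lift_def last_unit_def)
  let ?S = "subalg_gen phi (n + 1) H"
  have lift: "diag_lift n x \<in> ?S" if "x \<in> power_carrier n" for x
    using diag_lift_subalg_gen[OF n _ that[folded G(2)], of H] by (auto simp: H_def)
  have e: "last_unit n \<in> ?S" by (auto simp: H_def intro: subalg_gen.gen)
  have "power_carrier (n + 1) \<subseteq> ?S"
  proof
    fix f :: "nat \<Rightarrow> 'a" assume f: "f \<in> power_carrier (n + 1)"
    obtain a b where ab: "a \<in> power_carrier n" "b \<in> power_carrier n"
      and f_eq: "f = (\<lambda>i. (diag_lift n a i + - (last_unit n i * diag_lift n a i))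
                         + last_unit n i * diag_lift n b i)"
      using power_carrier_Suc_decomp[OF n f] by blast
    define la where "la = diag_lift n a"
    define lb where "lb = diag_lift n b"
    have la: "la \<in> ?S" and lb: "lb \<in> ?S" using lift ab by (auto simp: la_def lb_def)
    have ea: "(\<lambda>i. last_unit n i * la i) \<in> ?S" using e la by (rule subalg_gen.mult)
    have "(\<lambda>i. - (last_unit n i * la i)) \<in> ?S" by (rule subalg_gen_uminus[OF R H_sub ea])
    with la have "(\<lambda>i. la i + - (last_unit n i * la i)) \<in> ?S" by (rule subalg_gen.add)
    moreover have "(\<lambda>i. last_unit n i * lb i) \<in> ?S" using e lb by (rule subalg_gen.mult)
    ultimately have "(\<lambda>i. (la i + - (last_unit n i * la i)) + last_unit n i * lb i) \<in> ?S"
      by (rule subalg_gen.add)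
    then show "f \<in> ?S" using f_eq by (simp add: la_def lb_def)
  qed
  then show "?S = power_carrier (n + 1)" using subalg_gen_subset_carrier[OF H_sub] by blast
qed

lemma can_gen_Suc:
  assumes R: "R_algebra phi" and n: "0 < n" and cg: "can_gen phi n m"
  shows "can_gen phi (n + 1) (m + 1)"
proof -
  obtain G where G: "finite G" "card G \<le> m" "G \<subseteq> power_carrier n"
    "subalg_gen phi n G = power_carrier n"
    using cg by (auto simp: can_gen_def)
  define H where "H = insert (last_unit n) (diag_lift n ` G)"
  have "card H \<le> card (diag_lift n ` G) + 1"
    by (simp add: H_def card_insert_if G(1))
  also have "\<dots> \<le> card G + 1" using card_image_le[OF G(1)] by simp
  finally have "card H \<le> card G + 1" .
  then show ?thesis
    using subalg_gen_lift_generators[OF R n G(3,4)] G(1,2)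
    unfolding can_gen_def H_def[symmetric] by (intro exI[of _ H]) (auto simp: H_def)
qed

lemma can_gen_mono: "can_gen phi n k \<Longrightarrow> k \<le> m \<Longrightarrow> can_gen phi n m"
  unfolding can_gen_def by (meson order_trans)

lemma can_gen_zero:
  fixes phi :: "'r::comm_ring_1 \<Rightarrow> 'a::ring_1"
  shows "can_gen phi 0 m"
  unfolding can_gen_def using subalg_gen_zero_power[of phi] by (intro exI[of _ "{}"]) auto

lemma gen_num_finite:
  assumes "gen_num phi m = enat g"
  shows "can_gen phi g m" and "\<not> can_gen phi (g + 1) m"
proof -
  let ?K = "{k. can_gen phi k m}"
  have fin: "finite ?K" and g: "g = Max ?K"
    using assms by (auto simp: gen_num_def split: if_splits)
  have "?K \<noteq> {}" using can_gen_zero by blast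
  then show "can_gen phi g m" using Max_in[OF fin] g by simp
  show "\<not> can_gen phi (g + 1) m"
    using Max_ge[OF fin, of "g + 1"] g by auto
qed

theorem mainTheorem8:
  fixes phi :: "'r::comm_ring_1 \<Rightarrow> 'a::ring_1"
  assumes "R_algebra phi"
  shows "(\<forall>n m. 0 < n \<longrightarrow> 0 < m \<longrightarrow> can_gen phi n m \<longrightarrow> can_gen phi (n + 1) (m + 1))
    \<and> (\<forall>m g. 0 < m \<longrightarrow> gen_num phi m = enat g \<longrightarrow> 1 \<le> g
         \<longrightarrow> (LEAST k. can_gen phi (g + 1) k) = m + 1)"
proof (intro conjI allI impI)
  fix n m :: nat assume "0 < n" "can_gen phi n m"
  then show "can_gen phi (n + 1) (m + 1)" using can_gen_Suc[OF assms] by blast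
next
  fix m g :: nat assume g: "gen_num phi m = enat g" and "1 \<le> g"
  then have upper: "can_gen phi (g + 1) (m + 1)"
    using can_gen_Suc[OF assms] gen_num_finite(1)[OF g] by simp
  have lower: "m + 1 \<le> k" if "can_gen phi (g + 1) k" for k
    using that can_gen_mono[of phi "g + 1" k m] gen_num_finite(2)[OF g] by fastforce
  show "(LEAST k. can_gen phi (g + 1) k) = m + 1"
    using upper lower by (rule Least_equality)
qed

end
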